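(* Let $f\in C^1(\mathbb{R})$ and consider the primary matrix function $f:\mathrm{Sym}(n)\to\mathrm{Sym}(n)$. Consider the conditions: (H-mon) $\langle f(B)-f(A),B-A\rangle>0$ for all $A\neq B\in\mathrm{Sym}(n)$; (O-mon) for all $A,B\in\mathrm{Sym}(n)$: if $B-A$ is positive definite then $f(B)-f(A)$ is positive definite; (S-mon) for all $a,b\in\mathbb{R}$: $b>a$ implies $f(b)>f(a)$; (P-mon) $\langle f(A+H)-f(A),H\rangle>0$ for all $H\in\mathrm{PSym}(n)$ and $A\in\mathrm{Sym}(n)$. Then (O-mon) $\Rightarrow$ (S-mon) $\Leftrightarrow$ (H-mon) $\Leftrightarrow$ (P-mon), and these are the only implications that hold in general; in particular (S-mon) does not in general imply (O-mon).
   Context: $\mathrm{Sym}(n)$ is the space of real symmetric $n\times n$ matrices with inner product $\langle X,Y\rangle=\mathrm{tr}(X^TY)$, and $\mathrm{PSym}(n)$ is the set of symmetric positive definite matrices. The primary matrix function is $f(A)=Q^T\mathrm{diag}(f(\lambda_1),\dots,f(\lambda_n))Q$ whenever $A=Q^T\mathrm{diag}(\lambda_1,\dots,\lambda_n)Q$ with $Q\in\mathrm{O}(n)$. *)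

theory Defs
  imports "HOL-Analysis.Analysis"
begin

definition C1_real :: "(real \<Rightarrow> real) \<Rightarrow> bool" where
  "C1_real f \<longleftrightarrow> (\<exists>f'. (\<forall>x. (f has_real_derivative f' x) (at x)) \<and> continuous_on UNIV f')"

definition sym_mat :: "real^'n^'n \<Rightarrow> bool" where
  "sym_mat A \<longleftrightarrow> transpose A = A"

definition pos_def_mat :: "real^'n^'n \<Rightarrow> bool" where
  "pos_def_mat A \<longleftrightarrow> sym_mat A \<and> (\<forall>x. x \<noteq> 0 \<longrightarrow> 0 < x \<bullet> (A *v x))"

definition frob_inner :: "real^'n^'n \<Rightarrow> real^'n^'n \<Rightarrow> real" where
  "frob_inner X Y = trace (transpose X ** Y)"

definition diag_mat :: "('n \<Rightarrow> real) \<Rightarrow> real^'n^'n" where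
  "diag_mat l = (\<chi> i j. if i = j then l i else 0)"

definition mat_fun :: "(real \<Rightarrow> real) \<Rightarrow> real^'n^'n \<Rightarrow> real^'n^'n" where
  "mat_fun f A = (let (Q, l) = (SOME (Q, l). orthogonal_matrix Q \<and> A = transpose Q ** diag_mat l ** Q)
                  in transpose Q ** diag_mat (\<lambda>i. f (l i)) ** Q)"

definition H_mon :: "('n::finite) itself \<Rightarrow> (real \<Rightarrow> real) \<Rightarrow> bool" where
  "H_mon _ f \<longleftrightarrow> (\<forall>A B :: real^'n^'n. sym_mat A \<and> sym_mat B \<and> A \<noteq> B \<longrightarrow>
      frob_inner (mat_fun f B - mat_fun f A) (B - A) > 0)"

definition O_mon :: "('n::finite) itself \<Rightarrow> (real \<Rightarrow> real) \<Rightarrow> bool" where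
  "O_mon _ f \<longleftrightarrow> (\<forall>A B :: real^'n^'n. sym_mat A \<and> sym_mat B \<and> pos_def_mat (B - A) \<longrightarrow>
      pos_def_mat (mat_fun f B - mat_fun f A))"

definition S_mon :: "(real \<Rightarrow> real) \<Rightarrow> bool" where
  "S_mon f \<longleftrightarrow> (\<forall>a b. b > a \<longrightarrow> f b > f a)"

definition P_mon :: "('n::finite) itself \<Rightarrow> (real \<Rightarrow> real) \<Rightarrow> bool" where
  "P_mon _ f \<longleftrightarrow> (\<forall>A H :: real^'n^'n. sym_mat A \<and> pos_def_mat H \<longrightarrow>
      frob_inner (mat_fun f (A + H) - mat_fun f A) H > 0)"

end

theory Submission
  imports Defs
begin

text \<open>Write \<open>A = P\<^sup>T diag(\<alpha>) P\<close> and \<open>B = Q\<^sup>T diag(\<beta>) Q\<close> with \<open>P, Q\<close> orthogonal. Then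
  \<open>\<langle>f(B) - f(A), B - A\<rangle> = \<Sum>\<^sub>i\<^sub>j ((P Q\<^sup>T)\<^sub>i\<^sub>j)\<^sup>2 (f(\<beta>\<^sub>j) - f(\<alpha>\<^sub>i)) (\<beta>\<^sub>j - \<alpha>\<^sub>i)\<close>,
  a sum of nonnegative terms for increasing \<open>f\<close>, and all terms vanish only if \<open>\<alpha>\<^sub>i = \<beta>\<^sub>j\<close>
  whenever \<open>(P Q\<^sup>T)\<^sub>i\<^sub>j \<noteq> 0\<close>, i.e.\ only if \<open>A = B\<close>; this gives (S-mon) \<open>\<Longrightarrow>\<close> (H-mon), and
  (P-mon) is (H-mon) for the pairs \<open>A, A + H\<close>. Evaluating (O-mon), (H-mon) or (P-mon) on scalar
  matrices \<open>a I\<close>, \<open>b I\<close> gives back (S-mon). For \<open>n \<ge> 2\<close> the increasing function \<open>x\<^sup>3\<close> is not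
  operator monotone: two non-commuting matrices \<open>A \<le> B\<close> are mapped to \<open>A\<^sup>3, B\<^sup>3\<close> with
  \<open>B\<^sup>3 - A\<^sup>3\<close> having a negative diagonal entry.\<close>

lemma matrix_mul_transpose_nth:
  "(X ** transpose Y) $ i $ j = (\<Sum>k\<in>UNIV. X $ i $ k * Y $ j $ k)"
  by (simp add: matrix_matrix_mult_def transpose_def)

lemma diag_mat_mul: "diag_mat l ** M = (\<chi> i j. l i * M $ i $ j)"
  unfolding matrix_matrix_mult_def diag_mat_def vec_eq_iff
  by (simp add: if_distrib[of "\<lambda>x. x * _"] cong: if_cong)

lemma mul_diag_mat: "M ** diag_mat l = (\<chi> i j. M $ i $ j * l j)"
  unfolding matrix_matrix_mult_def diag_mat_def vec_eq_iff
  by (simp add: if_distrib[of "\<lambda>x. _ * x"] cong: if_cong)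

lemma transpose_diag_mat: "transpose (diag_mat l) = diag_mat l"
  by (simp add: vec_eq_iff transpose_def diag_mat_def)

lemma diag_mat_const: "diag_mat (\<lambda>_. a) = mat a"
  by (simp add: diag_mat_def mat_def)

lemma orthogonal_matrix_rows_inner:
  fixes U :: "real^'n^'n"
  assumes "orthogonal_matrix U"
  shows "(\<Sum>k\<in>UNIV. U $ i $ k * U $ j $ k) = (if i = j then 1 else 0)"
proof -
  have "(U ** transpose U) $ i $ j = mat 1 $ i $ j"
    using assms by (simp add: orthogonal_matrix_def)
  then show ?thesis by (simp add: matrix_mul_transpose_nth mat_def)
qed

lemma orthogonal_matrix_row_sq_sum:
  "orthogonal_matrix (U::real^'n^'n) \<Longrightarrow> (\<Sum>j\<in>UNIV. (U $ i $ j)^2) = 1"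
  using orthogonal_matrix_rows_inner[of U i i] by (simp add: power2_eq_square)

lemma orthogonal_matrix_col_sq_sum:
  "orthogonal_matrix (U::real^'n^'n) \<Longrightarrow> (\<Sum>i\<in>UNIV. (U $ i $ j)^2) = 1"
proof -
  assume "orthogonal_matrix U"
  then have "orthogonal_matrix (transpose U)" by simp
  from orthogonal_matrix_row_sq_sum[OF this, of j] show ?thesis by (simp add: transpose_def)
qed

lemma diag_conj_eq_iff:
  fixes P Q :: "real^'n^'n"
  assumes P: "orthogonal_matrix P" and Q: "orthogonal_matrix Q"
  shows "transpose P ** diag_mat a ** P = transpose Q ** diag_mat b ** Q \<longleftrightarrow>
         (\<forall>i j. (P ** transpose Q) $ i $ j \<noteq> 0 \<longrightarrow> a i = b j)"
proof -
  define R where "R = P ** transpose Q"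
  have PR: "transpose P ** R = transpose Q" and RQ: "R ** Q = P"
    using P Q unfolding R_def orthogonal_matrix_def
    by (metis matrix_mul_assoc matrix_mul_lid matrix_mul_rid)+
  have "transpose P ** diag_mat a ** P = transpose Q ** diag_mat b ** Q \<longleftrightarrow>
        diag_mat a ** R = R ** diag_mat b"
  proof
    assume eq: "transpose P ** diag_mat a ** P = transpose Q ** diag_mat b ** Q"
    have "diag_mat a ** R = P ** (transpose P ** diag_mat a ** P) ** transpose Q"
      using P by (simp add: R_def orthogonal_matrix_def matrix_mul_assoc)
    also have "\<dots> = P ** (transpose Q ** diag_mat b ** Q) ** transpose Q"
      by (simp add: eq)
    also have "\<dots> = R ** diag_mat b"
      using Q unfolding R_def orthogonal_matrix_def by (metis matrix_mul_assoc matrix_mul_rid)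
    finally show "diag_mat a ** R = R ** diag_mat b" .
  next
    assume comm: "diag_mat a ** R = R ** diag_mat b"
    have "transpose P ** diag_mat a ** P = transpose P ** (diag_mat a ** R) ** Q"
      by (metis RQ matrix_mul_assoc)
    also have "\<dots> = transpose Q ** diag_mat b ** Q"
      by (metis comm PR matrix_mul_assoc)
    finally show "transpose P ** diag_mat a ** P = transpose Q ** diag_mat b ** Q" .
  qed
  also have "\<dots> \<longleftrightarrow> (\<forall>i j. R $ i $ j \<noteq> 0 \<longrightarrow> a i = b j)"
    by (auto simp: diag_mat_mul mul_diag_mat vec_eq_iff mult.commute)
  finally show ?thesis unfolding R_def .
qed

text \<open>The choice made by \<open>SOME\<close> in \<open>mat_fun\<close> does not matter: two diagonalisations of
  the same matrix match eigenvalues along the nonzero entries of the transition matrix, and then so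
  do their images under \<open>f\<close>.\<close>
lemma mat_fun_diag_conj:
  fixes Q :: "real^'n^'n"
  assumes Q: "orthogonal_matrix Q"
  shows "mat_fun f (transpose Q ** diag_mat l ** Q) = transpose Q ** diag_mat (\<lambda>i. f (l i)) ** Q"
proof -
  let ?A = "transpose Q ** diag_mat l ** Q"
  obtain Q' l' where choice:
    "(SOME (Q, l). orthogonal_matrix Q \<and> ?A = transpose Q ** diag_mat l ** Q) = (Q', l')"
    by fastforce
  have "\<exists>p. (\<lambda>(Q, l). orthogonal_matrix Q \<and> ?A = transpose Q ** diag_mat l ** Q) p"
    using Q by auto
  from someI_ex[OF this] have Q': "orthogonal_matrix Q'"
    and A: "?A = transpose Q' ** diag_mat l' ** Q'"
    unfolding choice by simp_all
  have "mat_fun f ?A = transpose Q' ** diag_mat (\<lambda>i. f (l' i)) ** Q'"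
    unfolding mat_fun_def choice by simp
  also have "\<dots> = transpose Q ** diag_mat (\<lambda>i. f (l i)) ** Q"
    using A diag_conj_eq_iff[OF Q' Q, of l' l] diag_conj_eq_iff[OF Q' Q, of "\<lambda>i. f (l' i)"]
    by auto
  finally show ?thesis .
qed

lemma mat_fun_diag: "mat_fun f (diag_mat l) = diag_mat (\<lambda>i. f (l i))"
  using mat_fun_diag_conj[OF orthogonal_matrix_id, of f l] by simp

lemma mat_fun_mat: "mat_fun f (mat a) = mat (f a)"
  using mat_fun_diag[of f "\<lambda>_. a"] by (simp add: diag_mat_const)

lemma sym_mat_inner_commute: "sym_mat A \<Longrightarrow> (A *v x) \<bullet> y = x \<bullet> (A *v (y::real^'n))"
  by (metis dot_lmul_matrix sym_mat_def transpose_matrix_vector)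

lemma mult_le_square_mult_imp_eq_0:
  fixes q C :: real
  assumes "\<And>t. t * q \<le> t^2 * C"
  shows "q = 0"
proof -
  define d where "d = \<bar>C\<bar> + 1"
  have d: "d > 0" by (simp add: d_def)
  have "q^2 / d \<le> q^2 * C / d^2"
    using assms[of "q / d"] by (simp add: power2_eq_square power_divide)
  then have "q^2 * d \<le> q^2 * C"
    using d by (simp add: field_simps power2_eq_square)
  also have "\<dots> \<le> q^2 * \<bar>C\<bar>" by (simp add: mult_left_mono)
  finally have "q^2 \<le> 0" by (simp add: d_def algebra_simps)
  then show ?thesis by simp
qed

text \<open>Moving the maximiser \<open>u\<close> along the residual \<open>w = A u - (u \<bullet> A u) u\<close> would raise the
  quotient to first order by \<open>2 t \<parallel>w\<parallel>\<^sup>2\<close>, so \<open>w = 0\<close>.\<close>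
lemma sym_mat_rayleigh_max_eigenvector:
  fixes A :: "real^'n^'n"
  assumes sym: "sym_mat A" and V: "subspace V" and inv: "\<And>x. x \<in> V \<Longrightarrow> A *v x \<in> V"
    and u: "u \<in> V" "u \<bullet> u = 1"
    and max: "\<And>y. y \<in> V \<Longrightarrow> y \<bullet> (A *v y) \<le> (u \<bullet> (A *v u)) * (y \<bullet> y)"
  shows "A *v u = (u \<bullet> (A *v u)) *\<^sub>R u"
proof -
  define M where "M = u \<bullet> (A *v u)"
  define w where "w = A *v u - M *\<^sub>R u"
  have wV: "w \<in> V" unfolding w_def using inv u V by (simp add: subspace_diff subspace_scale)
  have uw: "u \<bullet> w = 0" unfolding w_def M_def using u by (simp add: inner_diff_right)
  have wAu: "w \<bullet> (A *v u) = w \<bullet> w"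
    using uw by (simp add: w_def inner_diff_left inner_diff_right inner_commute)
  have uAw: "u \<bullet> (A *v w) = w \<bullet> w"
    using sym_mat_inner_commute[OF sym, of u w] wAu by (simp add: inner_commute)
  have "t * (2 * (w \<bullet> w)) \<le> t^2 * (M * (w \<bullet> w) - w \<bullet> (A *v w))" for t
  proof -
    have "u + t *\<^sub>R w \<in> V" using u wV V by (simp add: subspace_add subspace_scale)
    from max[OF this] have
      "M + 2 * t * (w \<bullet> w) + t^2 * (w \<bullet> (A *v w)) \<le> M * (1 + t^2 * (w \<bullet> w))"
      using u uw uAw wAu
      by (simp add: M_def matrix_vector_right_distrib matrix_vector_mult_scaleR inner_add_left
          inner_add_right inner_commute power2_eq_square algebra_simps)
    then show ?thesis by (simp add: algebra_simps)
  qed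
  then have "2 * (w \<bullet> w) = 0" by (rule mult_le_square_mult_imp_eq_0)
  then have "w = 0" by simp
  then show ?thesis unfolding w_def M_def by simp
qed

lemma sym_mat_eigenvector_in_invariant_subspace:
  fixes A :: "real^'n^'n"
  assumes sym: "sym_mat A" and V: "subspace V" and inv: "\<And>x. x \<in> V \<Longrightarrow> A *v x \<in> V"
    and x0: "x0 \<in> V" "x0 \<noteq> 0"
  shows "\<exists>u\<in>V. norm u = 1 \<and> A *v u = (u \<bullet> (A *v u)) *\<^sub>R u"
proof -
  define K where "K = V \<inter> sphere 0 1"
  have "compact K" unfolding K_def
    using closed_subspace[OF V] compact_sphere by (simp add: closed_Int_compact)
  moreover have "x0 /\<^sub>R norm x0 \<in> K" unfolding K_def using x0 V by (simp add: subspace_scale)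
  then have "K \<noteq> {}" by blast
  moreover have "continuous_on K (\<lambda>y. y \<bullet> (A *v y))"
    by (intro continuous_intros)
  ultimately obtain u where uK: "u \<in> K" and umax: "\<And>y. y \<in> K \<Longrightarrow> y \<bullet> (A *v y) \<le> u \<bullet> (A *v u)"
    using continuous_attains_sup[of K "\<lambda>y. y \<bullet> (A *v y)"] by blast
  have uV: "u \<in> V" and un: "norm u = 1" using uK K_def by auto
  have "y \<bullet> (A *v y) \<le> (u \<bullet> (A *v u)) * (y \<bullet> y)" if "y \<in> V" for y
  proof (cases "y = 0")
    case False
    have "y /\<^sub>R norm y \<in> K" unfolding K_def using that V False by (simp add: subspace_scale)
    from umax[OF this] have "(y \<bullet> (A *v y)) / (norm y)^2 \<le> u \<bullet> (A *v u)"
      by (simp add: matrix_vector_mult_scaleR power2_eq_square divide_inverse mult_ac)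
    then show ?thesis using False by (simp add: divide_le_eq power2_norm_eq_inner mult.commute)
  qed simp
  then have "A *v u = (u \<bullet> (A *v u)) *\<^sub>R u"
    using sym_mat_rayleigh_max_eigenvector[OF sym V inv uV] un by (simp add: norm_eq_1)
  then show ?thesis using uV un by blast
qed

lemma sym_mat_orthogonal_complement_invariant:
  fixes A :: "real^'n^'n"
  assumes sym: "sym_mat A" and eig: "\<forall>u\<in>S. A *v u = (u \<bullet> (A *v u)) *\<^sub>R u"
    and y: "\<forall>x\<in>S. orthogonal x y"
  shows "\<forall>x\<in>S. orthogonal x (A *v y)"
proof
  fix x assume xS: "x \<in> S"
  have "x \<bullet> (A *v y) = (A *v x) \<bullet> y" using sym_mat_inner_commute[OF sym] by simp
  also have "\<dots> = (x \<bullet> (A *v x)) * (x \<bullet> y)" using eig xS by (metis inner_scaleR_left)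
  also have "\<dots> = 0" using y xS unfolding orthogonal_def by simp
  finally show "orthogonal x (A *v y)" unfolding orthogonal_def .
qed

lemma sym_mat_orthonormal_eigenvectors:
  fixes A :: "real^'n^'n"
  assumes sym: "sym_mat A" and k: "k \<le> CARD('n)"
  shows "\<exists>S. finite S \<and> card S = k \<and> pairwise orthogonal S \<and>
           (\<forall>u\<in>S. norm u = 1 \<and> A *v u = (u \<bullet> (A *v u)) *\<^sub>R u)"
  using k
proof (induction k)
  case 0
  show ?case by (rule exI[of _ "{}"]) auto
next
  case (Suc k)
  then obtain S where S: "finite S" "card S = k" "pairwise orthogonal S"
     "\<forall>u\<in>S. norm u = 1 \<and> A *v u = (u \<bullet> (A *v u)) *\<^sub>R u" by auto
  define V where "V = {y. \<forall>x\<in>S. orthogonal x y}"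
  have "dim S < DIM(real^'n)"
    using dim_le_card[OF span_superset S(1)] Suc.prems S(2) by simp
  then obtain x0 where x0: "x0 \<noteq> 0" "\<And>y. y \<in> span S \<Longrightarrow> orthogonal x0 y"
    using orthogonal_to_subspace_exists by blast
  have x0V: "x0 \<in> V" unfolding V_def using x0(2)[OF span_base] orthogonal_commute by blast
  have inv: "A *v y \<in> V" if "y \<in> V" for y
    using sym_mat_orthogonal_complement_invariant[OF sym _ that[unfolded V_def, simplified]] S(4)
    unfolding V_def by simp
  obtain u where u: "u \<in> V" "norm u = 1" "A *v u = (u \<bullet> (A *v u)) *\<^sub>R u"
    using sym_mat_eigenvector_in_invariant_subspace[OF sym _ inv x0V x0(1)]
      subspace_orthogonal_to_vectors unfolding V_def by blast
  have "u \<notin> S"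
  proof
    assume "u \<in> S"
    then have "orthogonal u u" using u(1) unfolding V_def by blast
    then show False using u(2) by (simp add: orthogonal_def)
  qed
  show ?case
  proof (intro exI[of _ "insert u S"] conjI)
    show "finite (insert u S)" and "card (insert u S) = Suc k" using S \<open>u \<notin> S\<close> by simp_all
    show "pairwise orthogonal (insert u S)"
      using S(3) u(1) unfolding V_def pairwise_insert by (auto simp: orthogonal_commute)
  qed (use S(4) u in auto)
qed

lemma sym_mat_spectral:
  fixes A :: "real^'n^'n"
  assumes sym: "sym_mat A"
  obtains Q l where "orthogonal_matrix Q" "A = transpose Q ** diag_mat l ** Q"
proof -
  obtain S where S: "finite S" "card S = CARD('n)" "pairwise orthogonal S"
     "\<forall>u\<in>S. norm u = 1 \<and> A *v u = (u \<bullet> (A *v u)) *\<^sub>R u"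
    using sym_mat_orthonormal_eigenvectors[OF sym, of "CARD('n)"] by auto
  obtain h where h: "bij_betw h (UNIV::'n set) S"
    using finite_same_card_bij[of "UNIV::'n set" S] S by auto
  define Q :: "real^'n^'n" where "Q = (\<chi> i. h i)"
  define l where "l i = h i \<bullet> (A *v h i)" for i
  have hS: "h i \<in> S" for i using h by (auto simp: bij_betw_def)
  have hinner: "h i \<bullet> h j = (if i = j then 1 else 0)" for i j
  proof (cases "i = j")
    case False
    then have "h i \<noteq> h j" using h by (auto simp: bij_betw_def inj_on_def)
    then show ?thesis using S(3) hS False unfolding pairwise_def orthogonal_def by auto
  qed (use S(4) hS in \<open>simp add: norm_eq_1\<close>)
  have "Q ** transpose Q = mat 1"
    using hinner by (simp add: vec_eq_iff matrix_mul_transpose_nth Q_def mat_def inner_vec_def)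
  then have orth: "orthogonal_matrix Q"
    unfolding orthogonal_matrix_def using matrix_left_right_inverse by blast
  have entries: "(Q ** A ** transpose Q) $ i $ j = h i \<bullet> (A *v h j)" for i j
    unfolding matrix_mul_transpose_nth
    by (simp add: Q_def inner_vec_def matrix_matrix_mult_def matrix_vector_mult_def
        sum_distrib_left sum_distrib_right mult_ac, subst sum.swap, simp add: mult_ac)
  have eig: "A *v h j = l j *\<^sub>R h j" for j using S(4) hS l_def by auto
  have "Q ** A ** transpose Q = diag_mat l"
    by (simp add: vec_eq_iff diag_mat_def entries eig hinner)
  moreover have "A = transpose Q ** (Q ** A ** transpose Q) ** Q"
    using orth unfolding orthogonal_matrix_def by (metis matrix_mul_assoc matrix_mul_lid matrix_mul_rid)
  ultimately show ?thesis using orth that by auto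
qed

lemma frob_inner_sum: "frob_inner X Y = (\<Sum>k\<in>UNIV. \<Sum>m\<in>UNIV. X $ m $ k * Y $ m $ k)"
  by (simp add: frob_inner_def trace_def matrix_matrix_mult_def transpose_def)

lemma frob_inner_diff_left: "frob_inner (X - Y) Z = frob_inner X Z - frob_inner Y Z"
  by (simp add: frob_inner_sum left_diff_distrib sum_subtractf)

lemma frob_inner_diff_right: "frob_inner Z (X - Y) = frob_inner Z X - frob_inner Z Y"
  by (simp add: frob_inner_sum right_diff_distrib sum_subtractf)

lemma diag_conj_nth:
  "(transpose U ** diag_mat a ** U) $ m $ k = (\<Sum>i\<in>UNIV. a i * (U $ i $ m * U $ i $ k))"
  unfolding mul_diag_mat by (simp add: matrix_matrix_mult_def transpose_def mult_ac)

lemma sum_swap_nested: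
  "(\<Sum>k\<in>A. \<Sum>m\<in>B. \<Sum>i\<in>C. \<Sum>j\<in>D. f k m i j) = (\<Sum>i\<in>C. \<Sum>j\<in>D. \<Sum>k\<in>A. \<Sum>m\<in>B. f k m i j)"
proof -
  have "(\<Sum>k\<in>A. \<Sum>m\<in>B. \<Sum>i\<in>C. \<Sum>j\<in>D. f k m i j) = (\<Sum>k\<in>A. \<Sum>i\<in>C. \<Sum>j\<in>D. \<Sum>m\<in>B. f k m i j)"
    by (rule sum.cong[OF refl], subst sum.swap, rule sum.cong[OF refl], rule sum.swap)
  also have "\<dots> = (\<Sum>i\<in>C. \<Sum>j\<in>D. \<Sum>k\<in>A. \<Sum>m\<in>B. f k m i j)"
    by (subst sum.swap, rule sum.cong[OF refl], rule sum.swap)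
  finally show ?thesis .
qed

lemma frob_inner_diag_conj:
  "frob_inner (transpose U ** diag_mat a ** U) (transpose V ** diag_mat b ** V) =
   (\<Sum>i\<in>UNIV. \<Sum>j\<in>UNIV. a i * b j * ((U ** transpose V) $ i $ j)^2)"
proof -
  have "frob_inner (transpose U ** diag_mat a ** U) (transpose V ** diag_mat b ** V) =
    (\<Sum>k\<in>UNIV. \<Sum>m\<in>UNIV. \<Sum>i\<in>UNIV. \<Sum>j\<in>UNIV. a i * b j * (U$i$m * V$j$m) * (U$i$k * V$j$k))"
    unfolding frob_inner_sum diag_conj_nth by (simp add: sum_product mult_ac)
  also have "\<dots> = (\<Sum>i\<in>UNIV. \<Sum>j\<in>UNIV. \<Sum>k\<in>UNIV. \<Sum>m\<in>UNIV. a i * b j * (U$i$m * V$j$m) * (U$i$k * V$j$k))"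
    by (rule sum_swap_nested)
  also have "\<dots> = (\<Sum>i\<in>UNIV. \<Sum>j\<in>UNIV. a i * b j * ((U ** transpose V) $ i $ j)^2)"
    by (simp add: matrix_mul_transpose_nth power2_eq_square sum_product sum_distrib_left mult_ac)
  finally show ?thesis .
qed

lemma frob_inner_diag_conj_same:
  assumes "orthogonal_matrix (Q::real^'n^'n)"
  shows "frob_inner (transpose Q ** diag_mat a ** Q) (transpose Q ** diag_mat b ** Q) =
         (\<Sum>j\<in>UNIV. a j * b j)"
  using orthogonal_matrix_rows_inner[OF assms]
  by (simp add: frob_inner_diag_conj matrix_mul_transpose_nth if_distrib[of "\<lambda>x. x^2"]
      if_distrib[of "\<lambda>x. _ * x"] cong: if_cong)

text \<open>The weights \<open>((P Q\<^sup>T)\<^sub>i\<^sub>j)\<^sup>2\<close> form a doubly stochastic matrix; this is what lets the four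
  cross terms recombine into a single sum of products of increments.\<close>
lemma frob_inner_diag_conj_diff:
  fixes P Q :: "real^'n^'n"
  assumes P: "orthogonal_matrix P" and Q: "orthogonal_matrix Q"
  shows "frob_inner (transpose Q ** diag_mat b ** Q - transpose P ** diag_mat a ** P)
                    (transpose Q ** diag_mat \<beta> ** Q - transpose P ** diag_mat \<alpha> ** P) =
         (\<Sum>i\<in>UNIV. \<Sum>j\<in>UNIV. ((P ** transpose Q) $ i $ j)^2 * ((b j - a i) * (\<beta> j - \<alpha> i)))"
proof -
  define c where "c i j = ((P ** transpose Q) $ i $ j)^2" for i j
  have R: "orthogonal_matrix (P ** transpose Q)" using P Q by (simp add: orthogonal_matrix_mul)
  have rows: "(\<Sum>j\<in>UNIV. c i j) = 1" for i
    unfolding c_def using orthogonal_matrix_row_sq_sum[OF R] .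
  have cols: "(\<Sum>i\<in>UNIV. c i j) = 1" for j
    unfolding c_def using orthogonal_matrix_col_sq_sum[OF R] .
  have swap: "(Q ** transpose P) $ j $ i = (P ** transpose Q) $ i $ j" for i j
    by (simp add: matrix_mul_transpose_nth mult.commute)
  have QQ: "frob_inner (transpose Q ** diag_mat b ** Q) (transpose Q ** diag_mat \<beta> ** Q) =
            (\<Sum>i\<in>UNIV. \<Sum>j\<in>UNIV. c i j * (b j * \<beta> j))"
  proof -
    have "frob_inner (transpose Q ** diag_mat b ** Q) (transpose Q ** diag_mat \<beta> ** Q) =
          (\<Sum>j\<in>UNIV. \<Sum>i\<in>UNIV. c i j * (b j * \<beta> j))"
      by (simp add: frob_inner_diag_conj_same[OF Q] cols flip: sum_distrib_right)
    also have "\<dots> = (\<Sum>i\<in>UNIV. \<Sum>j\<in>UNIV. c i j * (b j * \<beta> j))"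
      by (rule sum.swap)
    finally show ?thesis .
  qed
  have PP: "frob_inner (transpose P ** diag_mat a ** P) (transpose P ** diag_mat \<alpha> ** P) =
            (\<Sum>i\<in>UNIV. \<Sum>j\<in>UNIV. c i j * (a i * \<alpha> i))"
    by (simp add: frob_inner_diag_conj_same[OF P] rows flip: sum_distrib_right)
  have QP: "frob_inner (transpose Q ** diag_mat b ** Q) (transpose P ** diag_mat \<alpha> ** P) =
            (\<Sum>i\<in>UNIV. \<Sum>j\<in>UNIV. c i j * (b j * \<alpha> i))"
    unfolding frob_inner_diag_conj swap c_def by (subst sum.swap) (simp add: mult_ac)
  have PQ: "frob_inner (transpose P ** diag_mat a ** P) (transpose Q ** diag_mat \<beta> ** Q) =
            (\<Sum>i\<in>UNIV. \<Sum>j\<in>UNIV. c i j * (a i * \<beta> j))"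
    unfolding frob_inner_diag_conj c_def by (simp add: mult_ac)
  have "frob_inner (transpose Q ** diag_mat b ** Q - transpose P ** diag_mat a ** P)
                    (transpose Q ** diag_mat \<beta> ** Q - transpose P ** diag_mat \<alpha> ** P) =
        (\<Sum>i\<in>UNIV. \<Sum>j\<in>UNIV. c i j * ((b j - a i) * (\<beta> j - \<alpha> i)))"
    unfolding frob_inner_diff_left frob_inner_diff_right QQ PP QP PQ
    by (simp add: sum_subtractf sum.distrib ring_distribs mult_ac)
  then show ?thesis by (simp add: c_def)
qed

lemma S_mon_increment_product_pos:
  assumes "S_mon f" "a \<noteq> b"
  shows "0 < (f b - f a) * (b - a)"
  using assms unfolding S_mon_def
  by (cases "a < b") (auto simp: mult_pos_pos mult_neg_neg)

lemma S_mon_imp_H_mon: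
  assumes mono: "S_mon f"
  shows "H_mon TYPE('n::finite) f"
  unfolding H_mon_def
proof (intro allI impI, elim conjE)
  fix A B :: "real^'n^'n"
  assume "sym_mat A" "sym_mat B" "A \<noteq> B"
  obtain P \<alpha> where P: "orthogonal_matrix P" and A: "A = transpose P ** diag_mat \<alpha> ** P"
    using sym_mat_spectral[OF \<open>sym_mat A\<close>] by blast
  obtain Q \<beta> where Q: "orthogonal_matrix Q" and B: "B = transpose Q ** diag_mat \<beta> ** Q"
    using sym_mat_spectral[OF \<open>sym_mat B\<close>] by blast
  define w where
    "w i j = ((P ** transpose Q) $ i $ j)^2 * ((f (\<beta> j) - f (\<alpha> i)) * (\<beta> j - \<alpha> i))" for i j
  have nonneg: "0 \<le> w i j" for i j
    using S_mon_increment_product_pos[OF mono, of "\<alpha> i" "\<beta> j"] unfolding w_def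
    by (cases "\<alpha> i = \<beta> j") simp_all
  obtain i j where "(P ** transpose Q) $ i $ j \<noteq> 0" "\<alpha> i \<noteq> \<beta> j"
    using \<open>A \<noteq> B\<close> diag_conj_eq_iff[OF P Q] unfolding A B by blast
  then have "0 < w i j"
    using S_mon_increment_product_pos[OF mono] unfolding w_def by simp
  then have "0 < (\<Sum>i\<in>UNIV. \<Sum>j\<in>UNIV. w i j)"
    using nonneg by (intro sum_pos2[of _ i] sum_pos2[of _ j]) (auto intro: sum_nonneg)
  also have "\<dots> = frob_inner (mat_fun f B - mat_fun f A) (B - A)"
    unfolding A B mat_fun_diag_conj[OF P] mat_fun_diag_conj[OF Q] frob_inner_diag_conj_diff[OF P Q]
      w_def ..
  finally show "frob_inner (mat_fun f B - mat_fun f A) (B - A) > 0" .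
qed

lemma sym_mat_mat: "sym_mat (mat a :: real^'n^'n)"
  by (simp add: sym_mat_def)

lemma sym_mat_add: "sym_mat A \<Longrightarrow> sym_mat B \<Longrightarrow> sym_mat (A + B :: real^'n^'n)"
  by (simp add: sym_mat_def vec_eq_iff transpose_def)

lemma sym_mat_diff: "sym_mat A \<Longrightarrow> sym_mat B \<Longrightarrow> sym_mat (A - B :: real^'n^'n)"
  by (simp add: sym_mat_def vec_eq_iff transpose_def)

lemma mat_diff: "mat a - mat b = (mat (a - b) :: real^'n^'n)"
  by (simp add: vec_eq_iff mat_def)

lemma mat_add: "mat a + mat b = (mat (a + b) :: real^'n^'n)"
  by (simp add: vec_eq_iff mat_def)

lemma mat_eq_iff: "(mat a :: real^'n^'n) = mat b \<longleftrightarrow> a = b"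
  by (auto simp: vec_eq_iff mat_def)

lemma mat_mult_vec: "(mat c :: real^'n^'n) *v x = c *\<^sub>R x"
  by (simp add: vec_eq_iff matrix_vector_mult_def mat_def if_distrib[of "\<lambda>x. x * _"] cong: if_cong)

lemma pos_def_mat_mat_iff: "pos_def_mat (mat c :: real^'n^'n) \<longleftrightarrow> c > 0"
proof
  assume "pos_def_mat (mat c :: real^'n^'n)"
  then have "0 < (axis undefined 1 :: real^'n) \<bullet> (mat c *v axis undefined 1)"
    unfolding pos_def_mat_def by (simp add: axis_eq_0_iff)
  then show "c > 0" by (simp add: mat_mult_vec)
qed (simp add: pos_def_mat_def sym_mat_mat mat_mult_vec)

lemma pos_def_mat_nonzero: "pos_def_mat H \<Longrightarrow> H \<noteq> (0 :: real^'n^'n)"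
  by (metis less_irrefl mat_0 pos_def_mat_mat_iff)

lemma frob_inner_mat: "frob_inner (mat a :: real^'n^'n) (mat b) = real CARD('n) * a * b"
  by (simp add: frob_inner_sum mat_def if_distrib[of "\<lambda>z. z * _"] if_distrib[of "\<lambda>z. _ * z"]
      cong: if_cong)

lemma O_mon_imp_S_mon: "O_mon TYPE('n::finite) f \<Longrightarrow> S_mon f"
  unfolding S_mon_def O_mon_def
proof (intro allI impI)
  fix a b :: real
  assume O: "\<forall>A B :: real^'n^'n. sym_mat A \<and> sym_mat B \<and> pos_def_mat (B - A) \<longrightarrow>
               pos_def_mat (mat_fun f B - mat_fun f A)" and "a < b"
  then show "f a < f b"
    using O[rule_format, of "mat a" "mat b"]
    by (simp add: sym_mat_mat mat_fun_mat mat_diff pos_def_mat_mat_iff)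
qed

lemma H_mon_imp_S_mon: "H_mon TYPE('n::finite) f \<Longrightarrow> S_mon f"
  unfolding S_mon_def H_mon_def
proof (intro allI impI)
  fix a b :: real
  assume H: "\<forall>A B :: real^'n^'n. sym_mat A \<and> sym_mat B \<and> A \<noteq> B \<longrightarrow>
               frob_inner (mat_fun f B - mat_fun f A) (B - A) > 0" and "a < b"
  then show "f a < f b"
    using H[rule_format, of "mat a" "mat b"]
    by (simp add: sym_mat_mat mat_eq_iff mat_fun_mat mat_diff frob_inner_mat zero_less_mult_iff)
qed

lemma P_mon_imp_S_mon: "P_mon TYPE('n::finite) f \<Longrightarrow> S_mon f"
  unfolding S_mon_def P_mon_def
proof (intro allI impI)
  fix a b :: real
  assume P: "\<forall>A H :: real^'n^'n. sym_mat A \<and> pos_def_mat H \<longrightarrow>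
               frob_inner (mat_fun f (A + H) - mat_fun f A) H > 0" and "a < b"
  then show "f a < f b"
    using P[rule_format, of "mat a" "mat (b - a)"]
    by (simp add: sym_mat_mat pos_def_mat_mat_iff mat_add mat_fun_mat mat_diff frob_inner_mat
        zero_less_mult_iff)
qed

lemma H_mon_imp_P_mon: "H_mon TYPE('n::finite) f \<Longrightarrow> P_mon TYPE('n) f"
  unfolding H_mon_def P_mon_def
proof (intro allI impI, elim conjE)
  fix A H :: "real^'n^'n"
  assume "\<forall>A B :: real^'n^'n. sym_mat A \<and> sym_mat B \<and> A \<noteq> B \<longrightarrow>
            frob_inner (mat_fun f B - mat_fun f A) (B - A) > 0"
    and "sym_mat A" "pos_def_mat H"
  moreover have "sym_mat (A + H)" "A \<noteq> A + H"
    using \<open>sym_mat A\<close> \<open>pos_def_mat H\<close> pos_def_mat_nonzero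
    by (auto simp: pos_def_mat_def sym_mat_add)
  ultimately show "frob_inner (mat_fun f (A + H) - mat_fun f A) H > 0"
    by (metis add_diff_cancel_left')
qed

lemma S_mon_cube: "S_mon (\<lambda>x. x ^ 3)"
  unfolding S_mon_def
  by (metis less_le odd_numeral odd_real_root_power_cancel power_mono_odd)

lemma C1_real_cube: "C1_real (\<lambda>x. x ^ 3)"
  unfolding C1_real_def
proof (intro exI[of _ "\<lambda>x. 3 * x^2"] conjI allI)
  show "((\<lambda>x. x ^ 3) has_real_derivative 3 * x^2) (at x)" for x :: real
    using DERIV_pow[of 3 x] by simp
qed (intro continuous_intros)

definition givens :: "'n::finite \<Rightarrow> 'n \<Rightarrow> real \<Rightarrow> real \<Rightarrow> real^'n^'n" where
  "givens p q c s = (\<chi> i j.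
     if i = p then (if j = p then c else if j = q then s else 0)
     else if i = q then (if j = p then - s else if j = q then c else 0)
     else if i = j then 1 else 0)"

lemma givens_nth_other: "k \<notin> {p, q} \<Longrightarrow> givens p q c s $ i $ k = (if i = k then 1 else 0)"
  by (auto simp: givens_def)

lemma sum_UNIV_split_pair:
  fixes g :: "'n::finite \<Rightarrow> real"
  assumes "p \<noteq> q"
  shows "(\<Sum>k\<in>UNIV. g k) = g p + g q + (\<Sum>k\<in>UNIV - {p, q}. g k)"
  using sum.subset_diff[of "{p, q}" UNIV g] assms by simp

lemma orthogonal_matrix_givens:
  assumes pq: "p \<noteq> q" and cs: "c^2 + s^2 = 1"
  shows "orthogonal_matrix (givens p q c s)"
proof -
  let ?G = "givens p q c s"
  have "(\<Sum>k\<in>UNIV. ?G $ i $ k * ?G $ j $ k) = (if i = j then 1 else 0)" for i j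
  proof -
    have "(\<Sum>k\<in>UNIV - {p, q}. ?G $ i $ k * ?G $ j $ k) =
          (\<Sum>k\<in>UNIV - {p, q}. if k = i then (if j = i then 1 else 0) else 0)"
      by (intro sum.cong) (auto simp: givens_nth_other)
    then show ?thesis
      using pq cs unfolding sum_UNIV_split_pair[OF pq]
      by (auto simp: givens_def power2_eq_square algebra_simps)
  qed
  then have "?G ** transpose ?G = mat 1"
    by (simp add: vec_eq_iff matrix_mul_transpose_nth mat_def)
  then show ?thesis
    unfolding orthogonal_matrix_def using matrix_left_right_inverse by blast
qed

lemma givens_mult_vec_nth:
  assumes "p \<noteq> q"
  shows "(givens p q c s *v x) $ q = c * x $ q - s * x $ p"
proof -
  have "(\<Sum>k\<in>UNIV - {p, q}. givens p q c s $ q $ k * x $ k) = 0"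
    by (rule sum.neutral) (auto simp: givens_nth_other)
  then show ?thesis
    using assms by (simp add: matrix_vector_mult_def sum_UNIV_split_pair[OF assms] givens_def)
qed

lemma quad_form_diag_conj:
  fixes U :: "real^'n^'n"
  shows "x \<bullet> ((transpose U ** diag_mat d ** U) *v x) = (\<Sum>i\<in>UNIV. d i * ((U *v x) $ i)^2)"
proof -
  have "x \<bullet> ((transpose U ** diag_mat d ** U) *v x) = x \<bullet> (transpose U *v (diag_mat d *v (U *v x)))"
    by (simp add: matrix_vector_mul_assoc matrix_mul_assoc)
  also have "\<dots> = (U *v x) \<bullet> (diag_mat d *v (U *v x))"
    by (metis dot_lmul_matrix inner_commute transpose_matrix_vector)
  also have "\<dots> = (\<Sum>i\<in>UNIV. d i * ((U *v x) $ i)^2)"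
    by (simp add: inner_vec_def matrix_vector_mult_def diag_mat_def if_distrib[of "\<lambda>z. z * _"]
        power2_eq_square mult_ac cong: if_cong)
  finally show ?thesis .
qed

lemma quad_form_diag: "x \<bullet> (diag_mat d *v x) = (\<Sum>i\<in>UNIV. d i * (x $ i)^2)"
  using quad_form_diag_conj[of x "mat 1" d] by simp

text \<open>The pair \<open>A \<le> B\<close> witnessing that \<open>x\<^sup>3\<close> is not operator monotone: \<open>A\<close> has eigenvalues
  \<open>0, 2\<close> in a frame rotated by \<open>(3/5, 4/5)\<close> against the eigenbasis of \<open>B = diag(5, 1)\<close>,
  embedded in the coordinates \<open>p, q\<close> and padded with \<open>1\<close> resp. \<open>0\<close> elsewhere.\<close>
lemma cube_counterexample_pos_def:
  fixes p q :: "'n::finite"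
  assumes pq: "p \<noteq> q"
  defines "G \<equiv> givens p q (3/5) (4/5)"
  shows "pos_def_mat (diag_mat (\<lambda>i. if i = p then 5 else 1)
                      - transpose G ** diag_mat (\<lambda>i. if i = q then 2 else 0) ** G)"
  unfolding pos_def_mat_def
proof (intro conjI allI impI)
  show "sym_mat (diag_mat (\<lambda>i. if i = p then 5 else 1)
                 - transpose G ** diag_mat (\<lambda>i. if i = q then 2 else 0) ** G)"
    by (intro sym_mat_diff)
      (simp_all add: sym_mat_def transpose_diag_mat matrix_transpose_mul matrix_mul_assoc)
  fix x :: "real^'n"
  assume "x \<noteq> 0"
  define a b r where "a = x $ p" and "b = x $ q" and "r = (\<Sum>k\<in>UNIV - {p, q}. (x $ k)^2)"
  have "x \<bullet> x = a^2 + b^2 + r"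
    by (simp add: inner_vec_def sum_UNIV_split_pair[OF pq] a_def b_def r_def power2_eq_square)
  have "(\<Sum>i\<in>UNIV. (if i = p then 5 else 1) * (x $ i)^2) = 5 * a^2 + b^2 + r"
    using pq by (simp add: sum_UNIV_split_pair[OF pq] a_def b_def r_def)
  then have "x \<bullet> ((diag_mat (\<lambda>i. if i = p then 5 else 1)
                      - transpose G ** diag_mat (\<lambda>i. if i = q then 2 else 0) ** G) *v x) =
             (93 * a^2 + 48 * a * b + 7 * b^2) / 25 + r"
    unfolding matrix_vector_mult_diff_rdistrib inner_diff_right quad_form_diag quad_form_diag_conj
    by (simp add: if_distrib[of "\<lambda>z. z * _"] G_def givens_mult_vec_nth[OF pq] a_def b_def
        power2_eq_square algebra_simps cong: if_cong)
  also have "\<dots> \<ge> (x \<bullet> x) / 50"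
  proof -
    have "185 * (185 * a^2 + 96 * a * b + 13 * b^2) = (185 * a + 48 * b)^2 + 101 * b^2"
      by (simp add: power2_eq_square algebra_simps)
    then have "0 \<le> 185 * a^2 + 96 * a * b + 13 * b^2"
      by (metis zero_le_power2 add_nonneg_nonneg mult_nonneg_nonneg zero_le_numeral
          zero_le_mult_iff zero_less_numeral not_le)
    moreover have "0 \<le> r" by (simp add: r_def sum_nonneg)
    ultimately show ?thesis
      unfolding \<open>x \<bullet> x = a^2 + b^2 + r\<close> mult.assoc by (simp add: field_simps)
  qed
  finally show "0 < x \<bullet> ((diag_mat (\<lambda>i. if i = p then 5 else 1)
                     - transpose G ** diag_mat (\<lambda>i. if i = q then 2 else 0) ** G) *v x)"
    using \<open>x \<noteq> 0\<close> by (smt (verit) divide_pos_pos inner_gt_zero_iff)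
qed

lemma exists_S_mon_not_O_mon:
  assumes "CARD('n::finite) \<ge> 2"
  shows "\<exists>f. C1_real f \<and> S_mon f \<and> \<not> O_mon TYPE('n) f"
proof -
  obtain p q :: 'n where pq: "p \<noteq> q"
    using assms card_le_Suc0_iff_eq[of "UNIV :: 'n set"] by fastforce
  define G where "G = givens p q (3/5) (4/5)"
  define \<alpha> :: "'n \<Rightarrow> real" where "\<alpha> = (\<lambda>i. if i = q then 2 else 0)"
  define \<beta> :: "'n \<Rightarrow> real" where "\<beta> = (\<lambda>i. if i = p then 5 else 1)"
  define A where "A = transpose G ** diag_mat \<alpha> ** G"
  define B where "B = diag_mat \<beta>"
  have G: "orthogonal_matrix G"
    unfolding G_def by (rule orthogonal_matrix_givens[OF pq]) (simp add: power2_eq_square)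
  have "sym_mat A" "sym_mat B"
    by (simp_all add: A_def B_def sym_mat_def transpose_diag_mat matrix_transpose_mul matrix_mul_assoc)
  moreover have "pos_def_mat (B - A)"
    using cube_counterexample_pos_def[OF pq] by (simp add: A_def B_def G_def \<alpha>_def \<beta>_def)
  moreover have "\<not> pos_def_mat (mat_fun (\<lambda>x. x ^ 3) B - mat_fun (\<lambda>x. x ^ 3) A)"
  proof
    assume "pos_def_mat (mat_fun (\<lambda>x. x ^ 3) B - mat_fun (\<lambda>x. x ^ 3) A)"
    then have "0 < axis q 1 \<bullet> ((mat_fun (\<lambda>x. x ^ 3) B - mat_fun (\<lambda>x. x ^ 3) A) *v axis q 1)"
      unfolding pos_def_mat_def by (simp add: axis_eq_0_iff)
    also have "\<dots> = 1 - 8 * (3/5)^2"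
      unfolding A_def B_def mat_fun_diag mat_fun_diag_conj[OF G] matrix_vector_mult_diff_rdistrib
        inner_diff_right quad_form_diag quad_form_diag_conj
      using pq by (simp add: \<alpha>_def \<beta>_def G_def givens_mult_vec_nth axis_def sum_UNIV_split_pair[OF pq]
          if_distrib[of "\<lambda>z. z ^ 2"] if_distrib[of "\<lambda>z. z ^ 3"] if_distrib[of "\<lambda>z. z * _"]
          cong: if_cong)
    finally show False by (simp add: power2_eq_square)
  qed
  ultimately have "\<not> O_mon TYPE('n) (\<lambda>x. x ^ 3)"
    unfolding O_mon_def by blast
  then show ?thesis using C1_real_cube S_mon_cube by blast
qed

theorem proposition4p1:
  "(\<forall>f. C1_real f \<longrightarrow>
      (O_mon TYPE('n::finite) f \<longrightarrow> S_mon f) \<and>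
      (S_mon f \<longleftrightarrow> H_mon TYPE('n) f) \<and>
      (H_mon TYPE('n) f \<longleftrightarrow> P_mon TYPE('n) f)) \<and>
   (CARD('n) \<ge> 2 \<longrightarrow> (\<exists>f. C1_real f \<and> S_mon f \<and> \<not> O_mon TYPE('n) f))"
  using O_mon_imp_S_mon S_mon_imp_H_mon H_mon_imp_S_mon H_mon_imp_P_mon P_mon_imp_S_mon
    exists_S_mon_not_O_mon by blast

end
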